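(* Let $P, Q \subseteq \mathbb{R}^d$ be full-dimensional semi-rational polytopes such that $L_{P+w}(s) = L_{Q+w}(s)$ for all $w \in \mathbb{Z}^d$ and all real $s > 0$. Then $P = Q$.
   Context: For a polytope $P \subseteq \mathbb{R}^d$ and real $s \ge 0$, $L_P(s) = \#(sP \cap \mathbb{Z}^d)$, where $sP = \{sx : x \in P\}$. A polytope is semi-rational if it can be written as $\bigcap_{i=1}^n \{x \in \mathbb{R}^d : \langle a_i, x\rangle \le b_i\}$ with all $a_i \in \mathbb{Z}^d$ and all $b_i \in \mathbb{R}$. *)

theory Defs
  imports "HOL-Analysis.Analysis"
begin

definition int_points :: "(real ^ 'n) set" where
  "int_points = {x. \<forall>i. x $ i \<in> \<int>}"

definition lattice_count :: "(real ^ 'n) set \<Rightarrow> real \<Rightarrow> nat" where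
  "lattice_count P s = card ((\<lambda>x. s *\<^sub>R x) ` P \<inter> int_points)"

definition semi_rational :: "(real ^ 'n) set \<Rightarrow> bool" where
  "semi_rational P \<longleftrightarrow> polytope P \<and>
     (\<exists>H :: ((real ^ 'n) \<times> real) set. finite H \<and> (\<forall>(a, b) \<in> H. a \<in> int_points) \<and>
        P = {x. \<forall>(a, b) \<in> H. a \<bullet> x \<le> b})"

definition full_dimensional :: "(real ^ 'n) set \<Rightarrow> bool" where
  "full_dimensional P \<longleftrightarrow> aff_dim P = int CARD('n)"

end

theory Submission
  imports Defs
begin

text \<open>If some point of \<open>P\<close> lies outside \<open>Q\<close>, then, \<open>P\<close> being convex with nonempty interior
  and \<open>Q\<close> closed, there is such a point of the form \<open>x = a / q\<close> with \<open>a\<close> a lattice point.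
  Put \<open>w = M a\<close> and \<open>s = 1 / (M + 1/q)\<close>: the dilation by \<open>s\<close> sends \<open>x + w = (M + 1/q) a\<close>
  to \<open>a\<close>, and once \<open>M\<close> exceeds the diameter of \<open>P \<union> Q\<close> no other point of \<open>P + w\<close> or
  \<open>Q + w\<close> is sent to a lattice point, since distinct lattice points are at distance at
  least 1.  Hence \<open>L\<^bsub>P+w\<^esub>(s) = 1 \<noteq> 0 = L\<^bsub>Q+w\<^esub>(s)\<close>.\<close>

lemma full_dimensional_imp_interior_nonempty:
  fixes P :: "(real ^ 'n) set"
  assumes "convex P" "full_dimensional P"
  shows "interior P \<noteq> {}"
proof -
  have dim: "aff_dim P = int DIM(real ^ 'n)"
    using assms(2) by (simp add: full_dimensional_def)
  then have "P \<noteq> {}" by auto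
  then have "rel_interior P \<noteq> {}"
    using assms(1) by (simp add: rel_interior_eq_empty)
  then show ?thesis
    using dim by (simp add: interior_rel_interior_gen)
qed

lemma convex_interior_Diff_closed_nonempty:
  fixes P Q :: "'a::euclidean_space set"
  assumes "convex P" "interior P \<noteq> {}" "closed Q" "\<not> P \<subseteq> Q"
  shows "interior P - Q \<noteq> {}"
proof -
  have "P \<subseteq> closure (interior P)"
    using convex_closure_interior[OF assms(1,2)] closure_subset by blast
  then have "- Q \<inter> closure (interior P) \<noteq> {}"
    using assms(4) by blast
  then have "- Q \<inter> interior P \<noteq> {}"
    using open_Int_closure_eq_empty assms(3) by blast
  then show ?thesis by blast
qed

lemma int_points_dist_ge_1:
  assumes "a \<in> int_points" "b \<in> int_points" "a \<noteq> b"
  shows "1 \<le> dist a b"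
proof -
  obtain i where i: "a $ i \<noteq> b $ i"
    using assms(3) by (metis vec_eq_iff)
  have "a $ i - b $ i \<in> \<int>"
    using assms(1,2) by (simp add: int_points_def)
  then obtain m :: int where m: "a $ i - b $ i = of_int m"
    by (elim Ints_cases)
  with i have "1 \<le> \<bar>m\<bar>" by auto
  then have "1 \<le> \<bar>(a - b) $ i\<bar>" using m by simp
  also have "\<dots> \<le> dist a b"
    unfolding dist_norm by (rule component_le_norm_cart)
  finally show ?thesis .
qed

lemma scaled_int_points_dense:
  fixes U :: "(real ^ 'n) set"
  assumes "open U" "U \<noteq> {}"
  shows "\<exists>q::nat. \<exists>a. q \<ge> 1 \<and> a \<in> int_points \<and> inverse (real q) *\<^sub>R a \<in> U"
proof -
  obtain y r where "r > 0" and ball: "ball y r \<subseteq> U"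
    using assms by (meson all_not_in_conv open_contains_ball)
  obtain q :: nat where q: "real CARD('n) / r < real q"
    using reals_Archimedean2 by blast
  moreover have "0 < real CARD('n) / r"
    using \<open>r > 0\<close> by simp
  ultimately have "q \<ge> 1"
    by linarith
  then have qpos: "real q > 0" by simp
  define a :: "real ^ 'n" where "a = (\<chi> i. of_int \<lfloor>real q * y $ i\<rfloor>)"
  have a: "a \<in> int_points"
    by (simp add: a_def int_points_def)
  have component: "\<bar>(inverse (real q) *\<^sub>R a - y) $ i\<bar> \<le> inverse (real q)" for i
  proof -
    have "(inverse (real q) *\<^sub>R a - y) $ i = (of_int \<lfloor>real q * y $ i\<rfloor> - real q * y $ i) / real q"
      using qpos by (simp add: a_def field_simps)
    moreover have "\<bar>of_int \<lfloor>real q * y $ i\<rfloor> - real q * y $ i\<bar> \<le> 1"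
      unfolding abs_le_iff
      using of_int_floor_le[of "real q * y $ i"] real_of_int_floor_add_one_gt[of "real q * y $ i"]
      by linarith
    ultimately show ?thesis
      using qpos by (simp add: abs_div_pos divide_right_mono inverse_eq_divide)
  qed
  have "dist (inverse (real q) *\<^sub>R a) y \<le> (\<Sum>i\<in>UNIV. \<bar>(inverse (real q) *\<^sub>R a - y) $ i\<bar>)"
    unfolding dist_norm by (rule norm_le_l1_cart)
  also have "\<dots> \<le> real CARD('n) / real q"
    using sum_mono[OF component] by (simp add: field_simps)
  also have "\<dots> < r"
    using q qpos \<open>r > 0\<close> by (simp add: field_simps)
  finally have "inverse (real q) *\<^sub>R a \<in> U"
    using ball by (auto simp: dist_commute)
  then show ?thesis
    using \<open>q \<ge> 1\<close> a by blast
qed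

lemma dilation_lattice_point_unique:
  assumes a: "a \<in> int_points" and t: "t > 2 * R"
    and x: "x \<in> cball 0 R" and p: "p \<in> cball 0 R"
    and xw: "x + w = t *\<^sub>R a" and z: "inverse t *\<^sub>R (p + w) \<in> int_points"
  shows "p = x"
proof -
  define z where "z = inverse t *\<^sub>R (p + w)"
  have "R \<ge> 0"
    using x by (meson mem_cball_0 norm_ge_zero order.trans)
  with t have "t > 0" by linarith
  then have diff: "p - x = t *\<^sub>R (z - a)"
    using xw by (simp add: z_def algebra_simps)
  have "z = a"
  proof (rule ccontr)
    assume "z \<noteq> a"
    then have "1 \<le> dist z a"
      using int_points_dist_ge_1 z a by (simp add: z_def)
    then have "t \<le> norm (p - x)"
      using diff \<open>t > 0\<close> by (simp add: dist_norm)
    also have "\<dots> \<le> norm p + norm x"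
      by (rule norm_triangle_ineq4)
    also have "\<dots> \<le> 2 * R"
      using p x by simp
    finally show False using t by simp
  qed
  then show ?thesis
    using diff by simp
qed

lemma lattice_count_isolating_dilation:
  fixes S :: "(real ^ 'n) set"
  assumes a: "a \<in> int_points" and t: "t > 2 * R"
    and S: "S \<subseteq> cball 0 R" and x: "x \<in> cball 0 R" and xw: "x + w = t *\<^sub>R a"
  shows "lattice_count ((\<lambda>y. y + w) ` S) (inverse t) = (if x \<in> S then 1 else 0)"
proof -
  have "R \<ge> 0"
    using x by (meson mem_cball_0 norm_ge_zero order.trans)
  with t have "t > 0" by linarith
  have "(\<lambda>y. inverse t *\<^sub>R y) ` (\<lambda>y. y + w) ` S \<inter> int_points = (if x \<in> S then {a} else {})"
  proof -
    have "inverse t *\<^sub>R (x + w) = a"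
      using xw \<open>t > 0\<close> by simp
    moreover have "p = x" if "p \<in> S" "inverse t *\<^sub>R (p + w) \<in> int_points" for p
      using dilation_lattice_point_unique[OF a t x] S that xw by blast
    ultimately show ?thesis
      using a by (auto simp: image_image)
  qed
  then show ?thesis
    by (simp add: lattice_count_def)
qed

lemma lattice_count_translates_eq_imp_subset:
  fixes P Q :: "(real ^ 'n) set"
  assumes "convex P" "interior P \<noteq> {}" "bounded P" "compact Q"
    and counts: "\<And>w s. w \<in> int_points \<Longrightarrow> s > 0 \<Longrightarrow>
           lattice_count ((\<lambda>x. x + w) ` P) s = lattice_count ((\<lambda>x. x + w) ` Q) s"
  shows "P \<subseteq> Q"
proof (rule ccontr)
  assume "\<not> P \<subseteq> Q"
  moreover have "closed Q"
    using assms(4) by (rule compact_imp_closed)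
  ultimately have nonempty: "interior P - Q \<noteq> {}"
    using convex_interior_Diff_closed_nonempty assms(1,2) by blast
  have "open (interior P - Q)"
    using \<open>closed Q\<close> by (rule open_Diff[OF open_interior])
  then obtain q :: nat and a where q: "q \<ge> 1" and a: "a \<in> int_points"
    and x: "inverse (real q) *\<^sub>R a \<in> interior P - Q"
    using scaled_int_points_dense[OF _ nonempty] by metis
  define x where "x = inverse (real q) *\<^sub>R a"
  have "bounded (P \<union> Q)"
    by (simp add: assms(3) compact_imp_bounded[OF assms(4)])
  then obtain R where R: "P \<union> Q \<subseteq> cball 0 R"
    by (meson bounded_iff mem_cball_0 subsetI)
  obtain M :: nat where M: "real M > 2 * R"
    using reals_Archimedean2 by blast
  define t where "t = real M + inverse (real q)"
  have "inverse (real q) \<ge> 0" by simp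
  with M have t: "t > 2 * R"
    unfolding t_def by linarith
  have xw: "x + real M *\<^sub>R a = t *\<^sub>R a"
    by (simp add: x_def t_def algebra_simps)
  have w: "real M *\<^sub>R a \<in> int_points"
    using a by (simp add: int_points_def)
  have xP: "x \<in> P" "x \<notin> Q"
    using x interior_subset by (auto simp: x_def)
  with R have xR: "x \<in> cball 0 R"
    by blast
  have count: "lattice_count ((\<lambda>y. y + real M *\<^sub>R a) ` S) (inverse t) = (if x \<in> S then 1 else 0)"
    if "S \<subseteq> P \<union> Q" for S
    by (rule lattice_count_isolating_dilation[OF a t _ xR xw]) (use that R in blast)
  have "R \<ge> 0"
    using xR by (meson mem_cball_0 norm_ge_zero order.trans)
  with t have "inverse t > 0" by simp
  then have "lattice_count ((\<lambda>y. y + real M *\<^sub>R a) ` P) (inverse t)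
      = lattice_count ((\<lambda>y. y + real M *\<^sub>R a) ` Q) (inverse t)"
    by (rule counts[OF w])
  then show False
    using count[of P] count[of Q] xP(1,2) by simp
qed

theorem corollary3p6:
  fixes P Q :: "(real ^ 'n) set"
  assumes "semi_rational P" and "semi_rational Q"
    and "full_dimensional P" and "full_dimensional Q"
    and "\<And>w s. w \<in> int_points \<Longrightarrow> s > 0 \<Longrightarrow>
           lattice_count ((\<lambda>x. x + w) ` P) s = lattice_count ((\<lambda>x. x + w) ` Q) s"
  shows "P = Q"
proof -
  have P: "convex P" "bounded P" "compact P" and Q: "convex Q" "bounded Q" "compact Q"
    using assms(1,2) polytope_imp_convex polytope_imp_compact compact_imp_bounded
    by (auto simp: semi_rational_def)
  have "interior P \<noteq> {}" "interior Q \<noteq> {}"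
    using full_dimensional_imp_interior_nonempty P Q assms(3,4) by auto
  have "P \<subseteq> Q"
    by (rule lattice_count_translates_eq_imp_subset[OF P(1) _ P(2) Q(3)])
      (simp_all add: \<open>interior P \<noteq> {}\<close> assms(5))
  moreover have "Q \<subseteq> P"
    by (rule lattice_count_translates_eq_imp_subset[OF Q(1) _ Q(2) P(3)])
      (simp_all add: \<open>interior Q \<noteq> {}\<close> assms(5))
  ultimately show ?thesis
    by (rule subset_antisym)
qed

end
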